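(* For every $\gamma\in F(L)$ and $x_0\in\{x,y\}$, one has $\partial_{x_0}(\gamma)\in L$.
   Context: $A=\mathbb{R}\langle x,y\rangle$; $L\subset A$ is the free Lie algebra on $x,y$. $\operatorname{tr}$ is the projection $A\to A/\operatorname{span}\{ab-ba\}$. $F(L)$ is the quotient of $L\otimes L$ by the span of $a\otimes b-b\otimes a$ and $a\otimes[b,c]-[a,b]\otimes c$, regarded as a subspace of $A/\operatorname{span}\{ab-ba\}$ via $a\otimes b\mapsto\operatorname{tr}(ab)$ (an injective map). For $x_0\in\{x,y\}$, $\partial_{x_0}:A/\operatorname{span}\{ab-ba\}\to A$ is given on cyclic words by $\operatorname{tr}(a_1\cdots a_n)\mapsto\sum_{i:\,a_i=x_0}a_{i+1}\cdots a_n\,a_1\cdots a_{i-1}$ ($a_k\in\{x,y\}$), extended linearly; $\partial_{x_0}(\gamma)$ means this map applied to the image of $\gamma$. *)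

theory Defs
  imports Complex_Main
begin

text \<open>Letters of the two-letter alphabet; words are lists of letters.
  An element of A = R<x,y> is a finitely supported function from words to real
  coefficients.\<close>

datatype letter = X | Y

type_synonym word = "letter list"
type_synonym ncpoly = "word \<Rightarrow> real"

definition in_A :: "ncpoly \<Rightarrow> bool" where
  "in_A p \<longleftrightarrow> finite {w. p w \<noteq> 0}"

definition gen :: "letter \<Rightarrow> ncpoly" where
  "gen a = (\<lambda>w. if w = [a] then 1 else 0)"

definition ncadd :: "ncpoly \<Rightarrow> ncpoly \<Rightarrow> ncpoly" where
  "ncadd p q = (\<lambda>w. p w + q w)"

definition ncscale :: "real \<Rightarrow> ncpoly \<Rightarrow> ncpoly" where
  "ncscale c p = (\<lambda>w. c * p w)"

definition ncmul :: "ncpoly \<Rightarrow> ncpoly \<Rightarrow> ncpoly" where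
  "ncmul p q = (\<lambda>w. \<Sum>i\<le>length w. p (take i w) * q (drop i w))"

definition commutator :: "ncpoly \<Rightarrow> ncpoly \<Rightarrow> ncpoly" where
  "commutator a b = (\<lambda>w. ncmul a b w - ncmul b a w)"

inductive_set freeLie :: "ncpoly set" where
  gen_x: "gen X \<in> freeLie"
| gen_y: "gen Y \<in> freeLie"
| zero: "(\<lambda>w. 0) \<in> freeLie"
| add: "a \<in> freeLie \<Longrightarrow> b \<in> freeLie \<Longrightarrow> ncadd a b \<in> freeLie"
| scale: "a \<in> freeLie \<Longrightarrow> ncscale c a \<in> freeLie"
| bracket: "a \<in> freeLie \<Longrightarrow> b \<in> freeLie \<Longrightarrow> commutator a b \<in> freeLie"

text \<open>span{ a b : a, b in L }, the preimage in A of F(L).\<close>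
inductive_set LL_span :: "ncpoly set" where
  zero: "(\<lambda>w. 0) \<in> LL_span"
| prod: "a \<in> freeLie \<Longrightarrow> b \<in> freeLie \<Longrightarrow> ncmul a b \<in> LL_span"
| add: "p \<in> LL_span \<Longrightarrow> q \<in> LL_span \<Longrightarrow> ncadd p q \<in> LL_span"
| scale: "p \<in> LL_span \<Longrightarrow> ncscale c p \<in> LL_span"

text \<open>The trace map A \<rightarrow> A/span{ab-ba}.  The quotient is modelled concretely as
  functions on words constant on rotation classes (cyclic words): tr p w is the sum of
  the coefficients of p over the cyclic class of w.  Its kernel is exactly
  span{ab - ba}, so this is (an isomorphic copy of) the quotient map.\<close>
definition tr :: "ncpoly \<Rightarrow> ncpoly" where
  "tr p = (\<lambda>w. \<Sum>v\<in>range (\<lambda>i. rotate i w). p v)"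

text \<open>F(L) as a subspace of A/span{ab-ba}: image of a (x) b \<mapsto> tr(ab).\<close>
definition FL :: "ncpoly set" where
  "FL = tr ` LL_span"

text \<open>The cyclic derivative formula on words, extended linearly to A:
  a_1...a_n \<mapsto> sum over i with a_i = x0 of a_{i+1}...a_n a_1...a_{i-1}.
  Output words of length m come from input words of length m+1.\<close>
definition cyc_deriv_word :: "letter \<Rightarrow> ncpoly \<Rightarrow> ncpoly" where
  "cyc_deriv_word x0 p = (\<lambda>u. \<Sum>w\<in>{w. length w = Suc (length u)}.
      p w * real (card {i. i < length w \<and> w ! i = x0 \<and> drop (Suc i) w @ take i w = u}))"

definition cyc_deriv :: "letter \<Rightarrow> ncpoly \<Rightarrow> ncpoly" where
  "cyc_deriv x0 \<gamma> = cyc_deriv_word x0 (SOME p. in_A p \<and> tr p = \<gamma>)"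

end

theory Submission
  imports Defs
begin

text \<open>For a word \<open>a = u x\<^sub>0 v\<close> and any \<open>c\<close> put \<open>ins(a, c) = v c u\<close> (\<open>cyc_deriv_ins\<close>),
  extended bilinearly; the cyclic derivative is \<open>ins(\<cdot>, 1)\<close>. Cutting \<open>ab\<close> at an occurrence
  of \<open>x\<^sub>0\<close> lying in \<open>a\<close> or in \<open>b\<close> gives \<open>ins(ab, c) = ins(a, bc) + ins(b, ca)\<close>. Hence
  \<open>\<partial>(ab) = ins(a, b) + ins(b, a)\<close> and \<open>ins([a, b], c) = ins(a, [b, c]) - ins(b, [a, c])\<close>,
  so induction on the Lie generation of \<open>a\<close> gives \<open>ins(L, L) \<subseteq> L\<close> and therefore
  \<open>\<partial>(ab) \<in> L\<close> for \<open>a, b \<in> L\<close>. Finally \<open>\<partial>\<close> is well defined on the quotient: its value at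
  \<open>u\<close> is a sum over the rotations of \<open>u x\<^sub>0\<close>, hence a fixed multiple of the trace at
  \<open>u x\<^sub>0\<close>.\<close>

definition splits :: "'a list \<Rightarrow> ('a list \<times> 'a list) set" where
  "splits w = {(u, v). u @ v = w}"

lemma splits_Nil [simp]: "splits [] = {([], [])}"
  by (auto simp: splits_def)

lemma splits_Cons: "splits (a # w) = insert ([], a # w) (apfst (Cons a) ` splits w)"
  by (auto simp: splits_def image_iff Cons_eq_append_conv append_eq_Cons_conv)

lemma finite_splits [simp]: "finite (splits w)"
  by (induction w) (simp_all add: splits_Cons)

lemma sum_splits_Cons:
  "(\<Sum>(u, v)\<in>splits (a # w). f u v) = f [] (a # w) + (\<Sum>(u, v)\<in>splits w. f (a # u) v)"
proof -
  have "([], a # w) \<notin> apfst (Cons a) ` splits w"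
    by auto
  moreover have "inj_on (apfst (Cons a)) (splits w)"
    by (rule inj_onI) (auto simp: apfst_def map_prod_def split: prod.splits)
  ultimately show ?thesis
    by (simp add: splits_Cons sum.reindex case_prod_beta)
qed

lemma sum_splits_assoc:
  "(\<Sum>(x, r)\<in>splits w. \<Sum>(y, z)\<in>splits r. f x y z) =
   (\<Sum>(l, z)\<in>splits w. \<Sum>(x, y)\<in>splits l. f x y z)"
proof (induction w arbitrary: f)
  case (Cons a w)
  from Cons.IH[of "\<lambda>x. f (a # x)"] show ?case
    by (simp only: sum_splits_Cons) (simp add: split_def sum.distrib add.assoc)
qed simp

lemma sum_splits_append_Cons:
  "(\<Sum>(u, v)\<in>splits (xs @ y # ys). f u v) =
   (\<Sum>(u, v)\<in>splits xs. f u (v @ y # ys)) + (\<Sum>(u, v)\<in>splits ys. f (xs @ y # u) v)"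
  by (induction xs arbitrary: f) (simp_all add: sum_splits_Cons add.assoc)

lemma sum_splits_eq_sum_take_drop:
  "(\<Sum>i\<le>length w. f (take i w) (drop i w)) = (\<Sum>(u, v)\<in>splits w. f u v)"
proof (induction w arbitrary: f)
  case (Cons a w)
  from Cons.IH[of "\<lambda>u. f (a # u)"] show ?case
    by (simp add: sum_splits_Cons sum.atMost_Suc_shift del: sum.atMost_Suc)
qed simp

lemma sum_splits_Nil_left:
  assumes "\<And>u v. u \<noteq> [] \<Longrightarrow> f u v = 0"
  shows "(\<Sum>(u, v)\<in>splits w. f u v) = f [] w"
  using assms by (cases w) (simp_all add: sum_splits_Cons)

lemma sum_splits_Nil_right:
  assumes "\<And>u v. v \<noteq> [] \<Longrightarrow> f u v = 0"
  shows "(\<Sum>(u, v)\<in>splits w. f u v) = f w []"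
  using assms by (induction w arbitrary: f) (simp_all add: sum_splits_Cons)

lemma ncmul_eq_sum_splits: "ncmul p q w = (\<Sum>(u, v)\<in>splits w. p u * q v)"
  unfolding ncmul_def by (rule sum_splits_eq_sum_take_drop)

definition ncone :: ncpoly where
  "ncone = (\<lambda>w. if w = [] then 1 else 0)"

lemma ncmul_ncone_left [simp]: "ncmul ncone p = p"
  by (rule ext) (simp add: ncmul_eq_sum_splits ncone_def sum_splits_Nil_left)

lemma ncmul_ncone_right [simp]: "ncmul p ncone = p"
  by (rule ext) (simp add: ncmul_eq_sum_splits ncone_def sum_splits_Nil_right)

lemma finite_letter_UNIV: "finite (UNIV :: letter set)"
proof -
  have "(UNIV :: letter set) = {X, Y}"
    using letter.exhaust by auto
  then show ?thesis
    by (metis finite.emptyI finite.insertI)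
qed

lemma card_cyclic_occurrences:
  "card {i. i < length w \<and> w ! i = x0 \<and> drop (Suc i) w @ take i w = u} =
   card {(t, s). t @ s = u \<and> s @ x0 # t = w}"
proof (rule bij_betw_same_card[of "\<lambda>i. (drop (Suc i) w, take i w)"])
  show "bij_betw (\<lambda>i. (drop (Suc i) w, take i w))
    {i. i < length w \<and> w ! i = x0 \<and> drop (Suc i) w @ take i w = u}
    {(t, s). t @ s = u \<and> s @ x0 # t = w}"
  proof (rule bij_betw_imageI)
    show "inj_on (\<lambda>i. (drop (Suc i) w, take i w))
      {i. i < length w \<and> w ! i = x0 \<and> drop (Suc i) w @ take i w = u}"
      by (rule inj_onI) (metis (no_types, lifting) length_take mem_Collect_eq min.absorb4 prod.inject)
    show "(\<lambda>i. (drop (Suc i) w, take i w)) `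
      {i. i < length w \<and> w ! i = x0 \<and> drop (Suc i) w @ take i w = u} =
      {(t, s). t @ s = u \<and> s @ x0 # t = w}"
    proof (intro equalityI subsetI)
      fix z
      assume "z \<in> {(t, s). t @ s = u \<and> s @ x0 # t = w}"
      then obtain t s where "z = (t, s)" "t @ s = u" "s @ x0 # t = w"
        by auto
      then show "z \<in> (\<lambda>i. (drop (Suc i) w, take i w)) `
        {i. i < length w \<and> w ! i = x0 \<and> drop (Suc i) w @ take i w = u}"
        by (auto intro!: image_eqI[of _ _ "length s"])
    qed (auto simp: id_take_nth_drop[symmetric])
  qed
qed

lemma cyc_deriv_word_eq_sum_splits:
  "cyc_deriv_word x0 p u = (\<Sum>(t, s)\<in>splits u. p (s @ x0 # t))"
proof -
  let ?h = "\<lambda>(t, s). s @ x0 # t"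
  let ?W = "{w :: word. length w = Suc (length u)}"
  have finW: "finite ?W"
    using finite_lists_length_eq[OF finite_letter_UNIV, of "Suc (length u)"] by simp
  have "(\<Sum>z\<in>splits u. p (?h z)) = (\<Sum>w\<in>?W. \<Sum>z\<in>{z\<in>splits u. ?h z = w}. p (?h z))"
    by (intro sum.group[symmetric] finite_splits finW) (auto simp: splits_def)
  also have "\<dots> = (\<Sum>w\<in>?W. p w * card {(t, s). t @ s = u \<and> s @ x0 # t = w})"
    by (rule sum.cong[OF refl]) (auto simp: mult.commute splits_def split_def)
  also have "\<dots> = cyc_deriv_word x0 p u"
    unfolding cyc_deriv_word_def card_cyclic_occurrences ..
  finally show ?thesis
    by (simp add: split_def)
qed

lemma sum_lessThan_shift_periodic:
  fixes g :: "nat \<Rightarrow> 'a::cancel_comm_monoid_add"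
  assumes periodic: "\<And>k. g (k + n) = g k"
  shows "(\<Sum>k<n. g (k + j)) = (\<Sum>k<n. g k)"
proof (induction j)
  case (Suc j)
  have "g j + (\<Sum>k<n. g (k + Suc j)) = (\<Sum>k<Suc n. g (k + j))"
    by (subst sum.lessThan_Suc_shift) simp
  also have "\<dots> = g j + (\<Sum>k<n. g (k + j))"
    using periodic[of j] by (simp add: add.commute)
  finally show ?case
    using Suc.IH by simp
qed simp

definition rotations :: "'a list \<Rightarrow> 'a list set" where
  "rotations xs = range (\<lambda>i. rotate i xs)"

lemma finite_rotations: "finite (rotations xs)"
proof (rule finite_subset)
  show "rotations xs \<subseteq> {ys. set ys \<subseteq> set xs \<and> length ys = length xs}"
    by (auto simp: rotations_def)
qed (rule finite_lists_length_eq[OF finite_set])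

lemma card_rotations_pos: "card (rotations xs) > 0"
proof -
  have "xs \<in> rotations xs"
    by (auto simp: rotations_def intro: range_eqI[of _ _ 0])
  then show ?thesis
    using finite_rotations card_gt_0_iff by blast
qed

lemma rotate_image_rotations: "rotate k ` rotations xs = rotations xs"
proof (intro equalityI subsetI)
  fix ys
  assume "ys \<in> rotations xs"
  then obtain i where "ys = rotate i xs"
    by (auto simp: rotations_def)
  have "rotate k (rotate (i + (length xs - 1) * k) xs) = rotate (i + length xs * k) xs"
    by (cases xs) (simp_all add: rotate_rotate algebra_simps)
  also have "\<dots> = ys"
    using \<open>ys = rotate i xs\<close> by (metis mod_mult_self2 rotate_conv_mod)
  finally have "ys = rotate k (rotate (i + (length xs - 1) * k) xs)" ..
  then show "ys \<in> rotate k ` rotations xs"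
    by (auto simp: rotations_def)
qed (auto simp: rotations_def rotate_rotate)

text \<open>Double counting: the rotations \<open>rotate k xs\<close>, \<open>k < length xs\<close>, hit every element of
  the rotation class equally often.\<close>
lemma card_rotations_mult_sum_rotate:
  fixes f :: "'a list \<Rightarrow> 'b::comm_semiring_1_cancel"
  shows "of_nat (card (rotations xs)) * (\<Sum>k<length xs. f (rotate k xs)) =
    of_nat (length xs) * (\<Sum>v\<in>rotations xs. f v)"
proof -
  have orbit_sum: "(\<Sum>k<length xs. f (rotate k v)) = (\<Sum>k<length xs. f (rotate k xs))"
    if v: "v \<in> rotations xs" for v
  proof -
    obtain j where "v = rotate j xs"
      using v unfolding rotations_def by blast
    then have "(\<Sum>k<length xs. f (rotate k v)) = (\<Sum>k<length xs. f (rotate (k + j) xs))"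
      by (simp add: rotate_rotate)
    also have "\<dots> = (\<Sum>k<length xs. f (rotate k xs))"
      by (rule sum_lessThan_shift_periodic) (metis mod_add_self2 rotate_conv_mod)
    finally show ?thesis .
  qed
  have rotate_sum: "(\<Sum>v\<in>rotations xs. f (rotate k v)) = (\<Sum>v\<in>rotations xs. f v)" for k
  proof -
    have "inj_on (rotate k) (rotations xs)"
      unfolding rotate_def by (rule inj_on_subset[OF inj_fn[OF inj_rotate1]]) simp
    then show ?thesis
      using sum.reindex[of "rotate k" "rotations xs" f] by (simp add: rotate_image_rotations)
  qed
  have "of_nat (card (rotations xs)) * (\<Sum>k<length xs. f (rotate k xs)) =
      (\<Sum>v\<in>rotations xs. \<Sum>k<length xs. f (rotate k v))"
    by (simp add: orbit_sum)
  also have "\<dots> = (\<Sum>k<length xs. \<Sum>v\<in>rotations xs. f (rotate k v))"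
    by (rule sum.swap)
  also have "\<dots> = of_nat (length xs) * (\<Sum>v\<in>rotations xs. f v)"
    by (simp add: rotate_sum)
  finally show ?thesis .
qed

lemma cyc_deriv_word_eq_sum_rotate:
  "cyc_deriv_word x0 p u = (\<Sum>k<length (u @ [x0]). p (rotate k (u @ [x0])))"
proof -
  have "cyc_deriv_word x0 p u = (\<Sum>k\<le>length u. p (drop k u @ x0 # take k u))"
    by (simp add: cyc_deriv_word_eq_sum_splits sum_splits_eq_sum_take_drop[symmetric])
  also have "\<dots> = (\<Sum>k<length (u @ [x0]). p (rotate k (u @ [x0])))"
    unfolding length_append_singleton lessThan_Suc_atMost
    by (rule sum.cong[OF refl]) (simp add: rotate_drop_take)
  finally show ?thesis .
qed

lemma cyc_deriv_word_eq_tr: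
  "cyc_deriv_word x0 p u =
    real (length (u @ [x0])) / real (card (rotations (u @ [x0]))) * tr p (u @ [x0])"
  using card_rotations_mult_sum_rotate[of "u @ [x0]" p] card_rotations_pos[of "u @ [x0]"]
  by (simp add: cyc_deriv_word_eq_sum_rotate tr_def rotations_def[symmetric] field_simps)

lemma cyc_deriv_word_tr_cong: "tr p = tr q \<Longrightarrow> cyc_deriv_word x0 p = cyc_deriv_word x0 q"
  by (rule ext) (simp only: cyc_deriv_word_eq_tr)

definition cyc_deriv_ins :: "letter \<Rightarrow> ncpoly \<Rightarrow> ncpoly \<Rightarrow> ncpoly" where
  "cyc_deriv_ins x0 a c = (\<lambda>w. \<Sum>(v, r)\<in>splits w. \<Sum>(m, u)\<in>splits r. a (u @ x0 # v) * c m)"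

lemma cyc_deriv_ins_zero: "cyc_deriv_ins x0 (\<lambda>w. 0) c = (\<lambda>w. 0)"
  by (simp add: cyc_deriv_ins_def)

lemma cyc_deriv_ins_ncadd:
  "cyc_deriv_ins x0 (ncadd a b) c = ncadd (cyc_deriv_ins x0 a c) (cyc_deriv_ins x0 b c)"
  by (simp add: cyc_deriv_ins_def ncadd_def split_def sum.distrib distrib_right)

lemma cyc_deriv_ins_ncscale:
  "cyc_deriv_ins x0 (ncscale k a) c = ncscale k (cyc_deriv_ins x0 a c)"
  by (simp add: cyc_deriv_ins_def ncscale_def split_def sum_distrib_left mult.assoc)

lemma cyc_deriv_ins_diff_left:
  "cyc_deriv_ins x0 (\<lambda>w. a w - b w) c w = cyc_deriv_ins x0 a c w - cyc_deriv_ins x0 b c w"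
  by (simp add: cyc_deriv_ins_def split_def sum_subtractf left_diff_distrib)

lemma cyc_deriv_ins_diff_right:
  "cyc_deriv_ins x0 a (\<lambda>w. c w - d w) w = cyc_deriv_ins x0 a c w - cyc_deriv_ins x0 a d w"
  by (simp add: cyc_deriv_ins_def split_def sum_subtractf right_diff_distrib)

lemma cyc_deriv_ins_gen: "cyc_deriv_ins x0 (gen l) c = (if l = x0 then c else (\<lambda>w. 0))"
proof (rule ext)
  fix w
  have "cyc_deriv_ins x0 (gen l) c w = (\<Sum>(m, u)\<in>splits w. gen l (u @ [x0]) * c m)"
    unfolding cyc_deriv_ins_def by (rule sum_splits_Nil_left) (simp add: gen_def append_eq_Cons_conv)
  also have "\<dots> = gen l [x0] * c w"
    by (subst sum_splits_Nil_right) (simp_all add: gen_def)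
  finally show "cyc_deriv_ins x0 (gen l) c w = (if l = x0 then c else (\<lambda>w. 0)) w"
    by (simp add: gen_def)
qed

lemma cyc_deriv_ins_ncmul:
  "cyc_deriv_ins x0 (ncmul a b) c = ncadd (cyc_deriv_ins x0 a (ncmul b c)) (cyc_deriv_ins x0 b (ncmul c a))"
proof (rule ext)
  fix w
  define occ_a where "occ_a = (\<Sum>(v, r)\<in>splits w. \<Sum>(m, u)\<in>splits r.
    \<Sum>(p, q)\<in>splits v. a (u @ x0 # p) * b q * c m)"
  define occ_b where "occ_b = (\<Sum>(v, r)\<in>splits w. \<Sum>(m, u)\<in>splits r.
    \<Sum>(p, q)\<in>splits u. a p * b (q @ x0 # v) * c m)"
  have "cyc_deriv_ins x0 (ncmul a b) c w = occ_a + occ_b"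
    unfolding occ_a_def occ_b_def
    by (simp only: cyc_deriv_ins_def ncmul_eq_sum_splits sum_splits_append_Cons)
      (simp add: split_def sum.distrib sum_distrib_right distrib_right add.commute)
  also have "occ_a = (\<Sum>(v, r)\<in>splits w. \<Sum>(p, q)\<in>splits v. \<Sum>(m, u)\<in>splits r.
      a (u @ x0 # p) * b q * c m)"
    unfolding occ_a_def split_def by (rule sum.cong[OF refl]) (rule sum.swap)
  also have "\<dots> = (\<Sum>(p, s)\<in>splits w. \<Sum>(q, r)\<in>splits s. \<Sum>(m, u)\<in>splits r.
      a (u @ x0 # p) * b q * c m)"
    by (simp only: sum_splits_assoc[symmetric])
  also have "\<dots> = (\<Sum>(p, s)\<in>splits w. \<Sum>(l, u)\<in>splits s. \<Sum>(q, m)\<in>splits l.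
      a (u @ x0 # p) * b q * c m)"
    by (simp only: sum_splits_assoc)
  also have "\<dots> = cyc_deriv_ins x0 a (ncmul b c) w"
    by (simp add: cyc_deriv_ins_def ncmul_eq_sum_splits split_def sum_distrib_left ac_simps)
  also have "occ_b = (\<Sum>(v, r)\<in>splits w. \<Sum>(l, q)\<in>splits r. \<Sum>(m, p)\<in>splits l.
      a p * b (q @ x0 # v) * c m)"
    unfolding occ_b_def by (simp only: sum_splits_assoc)
  also have "\<dots> = cyc_deriv_ins x0 b (ncmul c a) w"
    by (simp add: cyc_deriv_ins_def ncmul_eq_sum_splits split_def sum_distrib_left ac_simps)
  finally show "cyc_deriv_ins x0 (ncmul a b) c w = ncadd (cyc_deriv_ins x0 a (ncmul b c)) (cyc_deriv_ins x0 b (ncmul c a)) w"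
    by (simp add: ncadd_def)
qed

lemma cyc_deriv_ins_commutator:
  "cyc_deriv_ins x0 (commutator a b) c =
   (\<lambda>w. cyc_deriv_ins x0 a (commutator b c) w - cyc_deriv_ins x0 b (commutator a c) w)"
  by (rule ext)
    (simp add: commutator_def cyc_deriv_ins_diff_left cyc_deriv_ins_diff_right
      cyc_deriv_ins_ncmul ncadd_def)

lemma freeLie_diff: "a \<in> freeLie \<Longrightarrow> b \<in> freeLie \<Longrightarrow> (\<lambda>w. a w - b w) \<in> freeLie"
  using freeLie.add[OF _ freeLie.scale, of a b "-1"] by (simp add: ncadd_def ncscale_def)

lemma cyc_deriv_ins_freeLie:
  "a \<in> freeLie \<Longrightarrow> c \<in> freeLie \<Longrightarrow> cyc_deriv_ins x0 a c \<in> freeLie"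
proof (induction a arbitrary: c rule: freeLie.induct)
  case (bracket a b)
  then show ?case
    unfolding cyc_deriv_ins_commutator by (simp add: freeLie_diff freeLie.bracket)
qed (simp_all add: cyc_deriv_ins_gen cyc_deriv_ins_zero cyc_deriv_ins_ncadd
    cyc_deriv_ins_ncscale freeLie.intros)

lemma cyc_deriv_word_eq_cyc_deriv_ins_ncone: "cyc_deriv_word x0 p = cyc_deriv_ins x0 p ncone"
proof (rule ext)
  fix w
  have "(\<Sum>(m, u)\<in>splits r. p (u @ x0 # v) * ncone m) = p (r @ x0 # v)" for r v
    by (subst sum_splits_Nil_left) (simp_all add: ncone_def)
  then show "cyc_deriv_word x0 p w = cyc_deriv_ins x0 p ncone w"
    by (simp add: cyc_deriv_word_eq_sum_splits cyc_deriv_ins_def)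
qed

lemma cyc_deriv_word_ncmul:
  "cyc_deriv_word x0 (ncmul a b) = ncadd (cyc_deriv_ins x0 a b) (cyc_deriv_ins x0 b a)"
  by (simp add: cyc_deriv_word_eq_cyc_deriv_ins_ncone cyc_deriv_ins_ncmul)

lemma cyc_deriv_word_LL_span: "p \<in> LL_span \<Longrightarrow> cyc_deriv_word x0 p \<in> freeLie"
proof (induction rule: LL_span.induct)
  case zero
  then show ?case
    by (simp add: cyc_deriv_word_eq_cyc_deriv_ins_ncone cyc_deriv_ins_zero freeLie.zero)
next
  case (prod a b)
  then show ?case
    by (simp add: cyc_deriv_word_ncmul cyc_deriv_ins_freeLie freeLie.add)
next
  case (add p q)
  then show ?case
    by (simp add: cyc_deriv_word_eq_cyc_deriv_ins_ncone cyc_deriv_ins_ncadd freeLie.add)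
next
  case (scale p c)
  then show ?case
    by (simp add: cyc_deriv_word_eq_cyc_deriv_ins_ncone cyc_deriv_ins_ncscale freeLie.scale)
qed

lemma in_A_zero: "in_A (\<lambda>w. 0)"
  by (simp add: in_A_def)

lemma in_A_gen: "in_A (gen a)"
  by (simp add: in_A_def gen_def)

lemma in_A_ncadd: "in_A p \<Longrightarrow> in_A q \<Longrightarrow> in_A (ncadd p q)"
  unfolding in_A_def ncadd_def
  by (rule finite_subset[of _ "{w. p w \<noteq> 0} \<union> {w. q w \<noteq> 0}"]) auto

lemma in_A_ncscale: "in_A p \<Longrightarrow> in_A (ncscale c p)"
  unfolding in_A_def ncscale_def
  by (rule finite_subset[of _ "{w. p w \<noteq> 0}"]) auto

lemma in_A_ncmul:
  assumes "in_A p" "in_A q"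
  shows "in_A (ncmul p q)"
proof -
  have "{w. ncmul p q w \<noteq> 0} \<subseteq> (\<lambda>(u, v). u @ v) ` ({u. p u \<noteq> 0} \<times> {v. q v \<noteq> 0})"
  proof
    fix w
    assume "w \<in> {w. ncmul p q w \<noteq> 0}"
    then obtain u v where "(u, v) \<in> splits w" "p u * q v \<noteq> 0"
      unfolding ncmul_eq_sum_splits by (auto elim: sum.not_neutral_contains_not_neutral)
    then show "w \<in> (\<lambda>(u, v). u @ v) ` ({u. p u \<noteq> 0} \<times> {v. q v \<noteq> 0})"
      by (force simp: splits_def)
  qed
  moreover have "finite ((\<lambda>(u, v). u @ v) ` ({u. p u \<noteq> 0} \<times> {v. q v \<noteq> 0}))"
    using assms by (simp add: in_A_def)
  ultimately show ?thesis
    unfolding in_A_def by (rule finite_subset)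
qed

lemma in_A_commutator: "in_A a \<Longrightarrow> in_A b \<Longrightarrow> in_A (commutator a b)"
  using in_A_ncadd[OF in_A_ncmul in_A_ncscale[OF in_A_ncmul], of a b b a "-1"]
  by (simp add: commutator_def ncadd_def ncscale_def)

lemma in_A_freeLie: "a \<in> freeLie \<Longrightarrow> in_A a"
  by (induction rule: freeLie.induct)
    (auto intro: in_A_gen in_A_zero in_A_ncadd in_A_ncscale in_A_commutator)

lemma in_A_LL_span: "p \<in> LL_span \<Longrightarrow> in_A p"
  by (induction rule: LL_span.induct)
    (auto intro: in_A_zero in_A_ncadd in_A_ncscale in_A_ncmul in_A_freeLie)

theorem mainTheorem5:
  fixes \<gamma> :: ncpoly and x0 :: letter
  assumes "\<gamma> \<in> FL"
  shows "cyc_deriv x0 \<gamma> \<in> freeLie"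
proof -
  obtain p where p: "p \<in> LL_span" "tr p = \<gamma>"
    using assms unfolding FL_def by auto
  define q where "q = (SOME q. in_A q \<and> tr q = \<gamma>)"
  have "in_A q \<and> tr q = \<gamma>"
    unfolding q_def by (rule someI[of _ p]) (simp add: p in_A_LL_span)
  then have "cyc_deriv x0 \<gamma> = cyc_deriv_word x0 p"
    unfolding cyc_deriv_def q_def[symmetric] by (intro cyc_deriv_word_tr_cong) (simp add: p)
  then show ?thesis
    using cyc_deriv_word_LL_span[OF p(1)] by simp
qed

end
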